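(* Let $G$ be a finite $p$-group and let $H, C_1, C_2$ be normal subgroups of $G$ such that $C_1\neq C_2$, $C_1,C_2\subseteq H$, and $|H:C_1|=|H:C_2|=p$. Then every subgroup $C$ of $H$ with $C_1\cap C_2\subseteq C$ is a normal subgroup of $G$. *)

theory Defs
  imports "HOL-Algebra.Algebra"
begin

definition finite_p_group :: "('a, 'b) monoid_scheme \<Rightarrow> nat \<Rightarrow> bool" where
  "finite_p_group G p \<longleftrightarrow> group G \<and> finite (carrier G) \<and> Factorial_Ring.prime p \<and> (\<exists>n. order G = p ^ n)"

definition sub_index :: "('a, 'b) monoid_scheme \<Rightarrow> 'a set \<Rightarrow> 'a set \<Rightarrow> nat" where
  "sub_index G H K = card (rcosets\<^bsub>G\<lparr>carrier := H\<rparr>\<^esub> K)"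

end

theory Submission
  imports Defs
begin

text \<open>Put \<open>D = C1 \<inter> C2\<close>, a normal subgroup of \<open>G\<close>. As \<open>C1 \<noteq> C2\<close> both have prime index in
  \<open>H\<close>, \<open>C1 C2 = H\<close>, and the second isomorphism theorem gives \<open>|C1 : D| = |H : C2| = p\<close>, so
  \<open>|H : D| = p\<^sup>2\<close>. Hence a subgroup \<open>C\<close> with \<open>D \<subseteq> C \<subseteq> H\<close> is \<open>D\<close>, \<open>H\<close>, or satisfies
  \<open>|C : D| = p\<close>. Two distinct subgroups of the last kind meet exactly in \<open>D\<close>, so counting the
  elements of \<open>H - D\<close> shows there are at most \<open>p + 1\<close> of them. If \<open>C\<close> is neither \<open>C1\<close> nor
  \<open>C2\<close>, its conjugates are subgroups of this kind different from the normal subgroups \<open>C1\<close>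
  and \<open>C2\<close>; hence there are fewer than \<open>p\<close> of them, and as their number is a power of \<open>p\<close>
  it is \<open>1\<close>.\<close>

lemma (in group) card_eq_sub_index_mult_card:
  assumes "subgroup A G" "subgroup B G" "A \<subseteq> B"
  shows "card B = sub_index G B A * card A"
proof -
  interpret B: group "G\<lparr>carrier := B\<rparr>"
    using assms(2) subgroup_imp_group by blast
  have "subgroup A (G\<lparr>carrier := B\<rparr>)"
    using subgroup_incl assms by blast
  from B.lagrange[OF this] show ?thesis
    unfolding order_def sub_index_def by simp
qed

lemma (in group) card_subgroup_dvd:
  assumes "subgroup A G" "subgroup B G" "A \<subseteq> B"
  shows "card A dvd card B"
  using card_eq_sub_index_mult_card[OF assms] by simp

lemma (in group) card_subgroup_pos:
  assumes "subgroup A G" "finite A"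
  shows "card A > 0"
  using assms subgroup.one_closed card_gt_0_iff by blast

lemma (in group) subgroup_eq_of_prime_index:
  assumes "Factorial_Ring.prime p" "finite B" "subgroup A G" "subgroup K G" "subgroup B G"
    and "A \<subseteq> K" "K \<subseteq> B" "card B = p * card A"
  shows "K = A \<or> K = B"
proof -
  have fin: "finite K" "finite A"
    using finite_subset[OF assms(7,2)] finite_subset[OF assms(6)] by auto
  obtain m where m: "card K = card A * m"
    using card_subgroup_dvd[OF assms(3,4,6)] by blast
  have "card A * m dvd card A * p"
    using card_subgroup_dvd[OF assms(4,5,7)] m assms(8) by (simp add: mult.commute)
  then have "m dvd p"
    using card_subgroup_pos[OF assms(3) fin(2)] by simp
  then have "m = 1 \<or> m = p"
    using assms(1) prime_nat_iff by blast
  then show ?thesis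
    using card_subset_eq[OF fin(1) assms(6)] card_subset_eq[OF assms(2) assms(7)] m assms(8)
    by (auto simp: mult.commute)
qed

lemma (in group) subgroup_cases_of_prime_square_index:
  assumes "Factorial_Ring.prime p" "finite B" "subgroup A G" "subgroup K G" "subgroup B G"
    and "A \<subseteq> K" "K \<subseteq> B" "card B = p\<^sup>2 * card A"
  shows "K = A \<or> card K = p * card A \<or> K = B"
proof -
  have fin: "finite K" "finite A"
    using finite_subset[OF assms(7,2)] finite_subset[OF assms(6)] by auto
  obtain m where m: "card K = card A * m"
    using card_subgroup_dvd[OF assms(3,4,6)] by blast
  have "card A * m dvd card A * p\<^sup>2"
    using card_subgroup_dvd[OF assms(4,5,7)] m assms(8) by (simp add: mult.commute)
  then have "m dvd p\<^sup>2"
    using card_subgroup_pos[OF assms(3) fin(2)] by simp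
  then obtain i where "i \<le> 2" "m = p ^ i"
    using divides_primepow_nat[OF assms(1)] by blast
  moreover have "i = 0 \<or> i = 1 \<or> i = 2"
    using \<open>i \<le> 2\<close> by auto
  ultimately consider "m = 1" | "m = p" | "m = p\<^sup>2"
    by auto
  then show ?thesis
  proof cases
    case 1
    then show ?thesis using card_subset_eq[OF fin(1) assms(6)] m by simp
  next
    case 2
    then show ?thesis using m by simp
  next
    case 3
    then show ?thesis using card_subset_eq[OF assms(2,7)] m assms(8) by (simp add: mult.commute)
  qed
qed

lemma (in group) sub_index_Int_eq_sub_index_set_mult:
  assumes "N \<lhd> G" "subgroup S G"
  shows "sub_index G S (N \<inter> S) = sub_index G (N <#> S) N"
proof -
  interpret second_isomorphism_grp N G S
    using assms by (simp add: second_isomorphism_grp_def second_isomorphism_grp_axioms_def)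
  have "G\<lparr>carrier := S\<rparr> Mod (N \<inter> S) \<cong> G\<lparr>carrier := N <#> S\<rparr> Mod N"
    using normal_intersection_quotient_isom unfolding is_iso_def by blast
  then show ?thesis
    using iso_same_card unfolding sub_index_def FactGroup_def by fastforce
qed

lemma (in group) card_Int_of_two_prime_index:
  assumes "finite (carrier G)" "Factorial_Ring.prime p" "subgroup H G" "subgroup C1 G" "C2 \<lhd> G"
    and "C1 \<noteq> C2" "C1 \<subseteq> H" "C2 \<subseteq> H" "sub_index G H C1 = p" "sub_index G H C2 = p"
  shows "card C1 = p * card (C1 \<inter> C2)" "card C2 = p * card (C1 \<inter> C2)"
    and "card H = p\<^sup>2 * card (C1 \<inter> C2)"
proof -
  interpret second_isomorphism_grp C2 G C1
    using assms by (simp add: second_isomorphism_grp_def second_isomorphism_grp_axioms_def)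
  have sC2: "subgroup C2 G"
    using assms(5) normal_imp_subgroup by blast
  have fin: "finite H" "finite C2"
    using finite_subset[OF subgroup.subset[OF assms(3)] assms(1)] finite_subset[OF assms(8)] by auto
  have H1: "card H = p * card C1"
    using card_eq_sub_index_mult_card[OF assms(4,3,7)] assms(9) by simp
  have H2: "card H = p * card C2"
    using card_eq_sub_index_mult_card[OF sC2 assms(3,8)] assms(10) by simp
  have "C2 <#> C1 \<subseteq> H"
    using assms(7,8) subgroup.m_closed[OF assms(3)] unfolding set_mult_def by blast
  then have "C2 <#> C1 = C2 \<or> C2 <#> C1 = H"
    using subgroup_eq_of_prime_index[OF assms(2) fin(1) sC2 normal_set_mult_subgroup assms(3)]
      H_contained_in_set_mult H2 by blast
  moreover have "card C1 = card C2"
    using H1 H2 prime_gt_0_nat[OF assms(2)] by simp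
  then have "C2 <#> C1 \<noteq> C2"
    using S_contained_in_set_mult card_subset_eq[OF fin(2)] assms(6) by metis
  ultimately have "C2 <#> C1 = H" by blast
  then have "sub_index G C1 (C2 \<inter> C1) = p"
    using sub_index_Int_eq_sub_index_set_mult[OF assms(5,4)] assms(10) by simp
  then show C1: "card C1 = p * card (C1 \<inter> C2)"
    using card_eq_sub_index_mult_card[OF subgroups_Inter_pair[OF sC2 assms(4)] assms(4)]
    by (simp add: Int_commute)
  then show "card C2 = p * card (C1 \<inter> C2)"
    using \<open>card C1 = card C2\<close> by simp
  show "card H = p\<^sup>2 * card (C1 \<inter> C2)"
    using C1 H1 by (simp add: power2_eq_square)
qed

lemma (in group) subgroups_Int_eq_of_prime_index:
  assumes "finite (carrier G)" "Factorial_Ring.prime p" "subgroup D G" "subgroup K G" "subgroup K' G"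
    and "D \<subseteq> K" "D \<subseteq> K'" "card K = p * card D" "card K' = p * card D" "K \<noteq> K'"
  shows "K \<inter> K' = D"
proof -
  have fin: "finite K" "finite K'"
    using finite_subset[OF subgroup.subset assms(1)] assms(4,5) by auto
  have "K \<inter> K' = D \<or> K \<inter> K' = K"
    using subgroup_eq_of_prime_index[OF assms(2) fin(1) assms(3) subgroups_Inter_pair[OF assms(4,5)] assms(4)]
      assms(6-8) by blast
  moreover have "K \<inter> K' \<noteq> K"
  proof
    assume "K \<inter> K' = K"
    then have "K \<subseteq> K'" by blast
    then show False
      using card_subset_eq[OF fin(2)] assms(8-10) by metis
  qed
  ultimately show ?thesis by blast
qed

lemma (in group) card_subgroups_of_prime_index_le:
  assumes "finite (carrier G)" "Factorial_Ring.prime p" "subgroup D G" "subgroup H G"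
    and "D \<subseteq> H" "card H = p\<^sup>2 * card D"
    and F: "\<And>K. K \<in> F \<Longrightarrow> subgroup K G \<and> D \<subseteq> K \<and> K \<subseteq> H \<and> card K = p * card D"
  shows "card F \<le> p + 1"
proof -
  have finH: "finite H"
    using finite_subset[OF subgroup.subset[OF assms(4)] assms(1)] .
  have finD: "finite D"
    using finite_subset[OF assms(5) finH] .
  have "F \<subseteq> Pow H"
    using F by blast
  then have finF: "finite F"
    using finH finite_subset by blast
  have card_diff: "card (K - D) = (p - 1) * card D" if "K \<in> F" for K
    using F[OF that] card_Diff_subset[OF finD] by (simp add: diff_mult_distrib)
  have "card (\<Union>K\<in>F. K - D) = (\<Sum>K\<in>F. card (K - D))"
  proof (rule card_UN_disjoint[OF finF])
    show "\<forall>K\<in>F. finite (K - D)"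
      using F finH by (meson finite_Diff finite_subset)
    show "\<forall>K\<in>F. \<forall>K'\<in>F. K \<noteq> K' \<longrightarrow> (K - D) \<inter> (K' - D) = {}"
    proof (intro ballI impI)
      fix K K' assume "K \<in> F" "K' \<in> F" "K \<noteq> K'"
      then have "K \<inter> K' = D"
        using subgroups_Int_eq_of_prime_index[OF assms(1-3)] F by meson
      then show "(K - D) \<inter> (K' - D) = {}" by blast
    qed
  qed
  also have "\<dots> = card F * ((p - 1) * card D)"
    using card_diff by simp
  finally have "card F * ((p - 1) * card D) = card (\<Union>K\<in>F. K - D)" ..
  also have "\<dots> \<le> card (H - D)"
    using F finH by (intro card_mono) auto
  also have "\<dots> = (p + 1) * ((p - 1) * card D)"
    using card_Diff_subset[OF finD assms(5)] assms(6)
    by (simp add: power2_eq_square algebra_simps)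
  finally have "card F * ((p - 1) * card D) \<le> (p + 1) * ((p - 1) * card D)" .
  moreover have "(p - 1) * card D > 0"
    using card_subgroup_pos[OF assms(3) finD] prime_gt_1_nat[OF assms(2)] by simp
  ultimately show ?thesis
    using mult_le_cancel2 by blast
qed

definition conjugates :: "('a, 'b) monoid_scheme \<Rightarrow> 'a set \<Rightarrow> 'a set set" where
  "conjugates G C = {g <#\<^bsub>G\<^esub> C #>\<^bsub>G\<^esub> inv\<^bsub>G\<^esub> g | g. g \<in> carrier G}"

lemma (in group) conjugate_mono:
  assumes "A \<subseteq> B"
  shows "g <# A #> inv g \<subseteq> g <# B #> inv g"
  using assms unfolding l_coset_def r_coset_def by blast

lemma (in group) conjugate_normal:
  assumes "N \<lhd> G" "g \<in> carrier G"
  shows "g <# N #> inv g = N"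
proof -
  have "N \<subseteq> carrier G"
    using assms(1) normal_imp_subgroup subgroup.subset by blast
  moreover have "g <# N = N #> g"
    using normal.coset_eq[OF assms(1)] assms(2) by simp
  ultimately show ?thesis
    using assms(2) by (simp add: coset_mult_assoc)
qed

lemma (in group) card_conjugate:
  assumes "C \<subseteq> carrier G" "g \<in> carrier G"
  shows "card (g <# C #> inv g) = card C"
proof -
  have "g <# C #> inv g = (\<lambda>c. g \<otimes> c \<otimes> inv g) ` C"
    unfolding l_coset_def r_coset_def by blast
  moreover have "inj_on (\<lambda>c. g \<otimes> c \<otimes> inv g) C"
    using assms conjugation_is_inj by (meson inj_onI subsetD)
  ultimately show ?thesis
    by (simp add: card_image)
qed

lemma (in group) self_in_conjugates:
  assumes "C \<subseteq> carrier G"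
  shows "C \<in> conjugates G C"
proof -
  have "C = \<one> <# C #> inv \<one>"
    using assms by (simp add: lcos_mult_one)
  then show ?thesis
    unfolding conjugates_def by blast
qed

lemma (in group) normal_in_conjugates_eq:
  assumes "C \<subseteq> carrier G" "N \<lhd> G" "N \<in> conjugates G C"
  shows "N = C"
proof -
  obtain g where g: "g \<in> carrier G" and N: "N = g <# C #> inv g"
    using assms(3) unfolding conjugates_def by blast
  have "C = inv g <# N #> g"
    using subgroup_conjugation_is_surj0[of "inv g" C] assms(1) g N by simp
  also have "\<dots> = N"
    using conjugate_normal[OF assms(2), of "inv g"] g by simp
  finally show ?thesis ..
qed

lemma (in group) card_conjugates_dvd_order:
  assumes "subgroup C G"
  shows "card (conjugates G C) dvd order G"
proof -
  let ?\<phi> = "\<lambda>g. \<lambda>H \<in> {H. subgroup H G}. g <# H #> inv g"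
  have "orbit G ?\<phi> C = conjugates G C"
    using assms unfolding orbit_def conjugates_def by (simp add: restrict_apply')
  moreover have "C \<in> {H. subgroup H G}"
    using assms by simp
  then have "card (orbit G ?\<phi> C) * card (stabilizer G ?\<phi> C) = order G"
    by (rule group_action.orbit_stabilizer_theorem[OF action_by_conjugation_on_subgroups_set])
  ultimately have "order G = card (conjugates G C) * card (stabilizer G ?\<phi> C)"
    by simp
  then show ?thesis ..
qed

lemma (in group) normal_of_card_conjugates_less_prime:
  assumes "Factorial_Ring.prime p" "order G = p ^ n" "subgroup C G" "card (conjugates G C) < p"
  shows "C \<lhd> G"
proof -
  have "card (conjugates G C) dvd p ^ n"
    using card_conjugates_dvd_order[OF assms(3)] assms(2) by simp
  then obtain i where i: "card (conjugates G C) = p ^ i"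
    using divides_primepow_nat[OF assms(1)] by blast
  have "i = 0"
  proof (rule ccontr)
    assume "i \<noteq> 0"
    then have "p \<le> p ^ i"
      using prime_gt_0_nat[OF assms(1)] by (simp add: self_le_power)
    then show False
      using assms(4) i by simp
  qed
  then have "card (conjugates G C) = 1"
    using i by simp
  then have conj_eq: "conjugates G C = {C}"
    using self_in_conjugates[OF subgroup.subset[OF assms(3)]] by (metis card_1_singletonE singletonD)
  show ?thesis
    unfolding normal_inv_iff
  proof (intro conjI assms(3) ballI)
    fix x h assume "x \<in> carrier G" "h \<in> C"
    then have "x \<otimes> h \<otimes> inv x \<in> x <# C #> inv x"
      unfolding l_coset_def r_coset_def by blast
    moreover have "x <# C #> inv x \<in> conjugates G C"
      using \<open>x \<in> carrier G\<close> unfolding conjugates_def by blast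
    then have "x <# C #> inv x = C"
      using conj_eq by blast
    ultimately show "x \<otimes> h \<otimes> inv x \<in> C" by simp
  qed
qed

lemma (in group) normal_of_prime_index_over_normal:
  assumes "Factorial_Ring.prime p" "order G = p ^ n"
    and "D \<lhd> G" "H \<lhd> G" "C1 \<lhd> G" "C2 \<lhd> G" "C1 \<noteq> C2" "card H = p\<^sup>2 * card D"
    and index_p: "\<And>K. K \<in> {C, C1, C2} \<Longrightarrow> subgroup K G \<and> D \<subseteq> K \<and> K \<subseteq> H \<and> card K = p * card D"
  shows "C \<lhd> G"
proof (cases "C = C1 \<or> C = C2")
  case True
  then show ?thesis
    using assms(5,6) by blast
next
  case False
  have "order G > 0"
    using assms(1,2) prime_gt_0_nat by simp
  then have fin: "finite (carrier G)"
    unfolding order_def using card_gt_0_iff by blast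
  have sD: "subgroup D G" and sH: "subgroup H G"
    using assms(3,4) normal_imp_subgroup by blast+
  have C: "subgroup C G" "D \<subseteq> C" "C \<subseteq> H" "card C = p * card D"
    using index_p[of C] by simp_all
  have CG: "C \<subseteq> carrier G"
    by (rule subgroup.subset[OF C(1)])
  have conj_index_p: "subgroup K G \<and> D \<subseteq> K \<and> K \<subseteq> H \<and> card K = p * card D"
    if K_conj: "K \<in> conjugates G C" for K
  proof -
    obtain g where g: "g \<in> carrier G" and K: "K = g <# C #> inv g"
      using K_conj unfolding conjugates_def by blast
    have "D \<subseteq> K"
      using conjugate_mono[OF C(2), of g] conjugate_normal[OF assms(3) g] K by simp
    moreover have "K \<subseteq> H"
      using conjugate_mono[OF C(3), of g] conjugate_normal[OF assms(4) g] K by simp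
    ultimately show ?thesis
      using subgroup_conjugation_is_surj2[OF g C(1)] card_conjugate[OF CG g] C(4) K by simp
  qed
  let ?F = "insert C1 (insert C2 (conjugates G C))"
  have "C1 \<notin> conjugates G C"
    using normal_in_conjugates_eq[OF CG assms(5)] False by blast
  moreover have "C2 \<notin> conjugates G C"
    using normal_in_conjugates_eq[OF CG assms(6)] False by blast
  moreover have "conjugates G C \<subseteq> Pow H"
    using conj_index_p by blast
  then have "finite (conjugates G C)"
    using finite_subset[OF subgroup.subset[OF sH] fin] by (simp add: finite_subset)
  ultimately have "card ?F = card (conjugates G C) + 2"
    using assms(7) by simp
  moreover have "card ?F \<le> p + 1"
  proof (rule card_subgroups_of_prime_index_le[OF fin assms(1) sD sH _ assms(8)])
    show "D \<subseteq> H"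
      using C(2,3) by blast
    fix K assume "K \<in> ?F"
    then consider "K \<in> {C1, C2}" | "K \<in> conjugates G C"
      by blast
    then show "subgroup K G \<and> D \<subseteq> K \<and> K \<subseteq> H \<and> card K = p * card D"
      using index_p conj_index_p by cases auto
  qed
  ultimately show ?thesis
    using normal_of_card_conjugates_less_prime[OF assms(1,2) C(1)] by simp
qed

theorem lemma3:
  fixes G :: "('a, 'b) monoid_scheme" and p :: nat and H C1 C2 :: "'a set"
  assumes "finite_p_group G p"
    and "H \<lhd> G" and "C1 \<lhd> G" and "C2 \<lhd> G"
    and "C1 \<noteq> C2" and "C1 \<subseteq> H" and "C2 \<subseteq> H"
    and "sub_index G H C1 = p" and "sub_index G H C2 = p"
  shows "\<forall>C. subgroup C G \<and> C \<subseteq> H \<and> C1 \<inter> C2 \<subseteq> C \<longrightarrow> C \<lhd> G"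
proof (intro allI impI)
  fix C assume C: "subgroup C G \<and> C \<subseteq> H \<and> C1 \<inter> C2 \<subseteq> C"
  obtain n where grp: "group G" and fin: "finite (carrier G)"
    and prime: "Factorial_Ring.prime p" and order: "order G = p ^ n"
    using assms(1) unfolding finite_p_group_def by blast
  interpret group G by (rule grp)
  have sub: "subgroup H G" "subgroup C1 G" "subgroup C2 G" "subgroup (C1 \<inter> C2) G"
    using assms(2-4) normal_imp_subgroup subgroups_Inter_pair by blast+
  have D: "C1 \<inter> C2 \<lhd> G"
    using normal_subgroup_intersect assms(3,4) by blast
  note cards = card_Int_of_two_prime_index[OF fin prime sub(1,2) assms(4-9)]
  have "finite H"
    using finite_subset[OF subgroup.subset[OF sub(1)] fin] .
  then consider "C = C1 \<inter> C2" | "card C = p * card (C1 \<inter> C2)" | "C = H"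
    using subgroup_cases_of_prime_square_index[OF prime _ sub(4) _ sub(1) _ _ cards(3)] C
    by blast
  then show "C \<lhd> G"
  proof cases
    case 2
    have "subgroup K G \<and> C1 \<inter> C2 \<subseteq> K \<and> K \<subseteq> H \<and> card K = p * card (C1 \<inter> C2)"
      if "K \<in> {C, C1, C2}" for K
      using that 2 C sub cards assms(6,7) by auto
    then show ?thesis
      by (rule normal_of_prime_index_over_normal[OF prime order D assms(2-5) cards(3)])
  qed (use D assms(2) in simp_all)
qed

end
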